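(* Assume Assumptions (LS), (UT) and (LT) below hold, with $\alpha>0$ the common exponent in (UT) and (LT). Let $K>0$, let $r\in\mathbb{N}$ and $w\in\mathbb{Z}$ with $|w|\le Kr^{5/6}$, let $\mathbb{L}_{\mathrm{up}}$ be the set of lattice points on the segment joining $(r-w-r^{2/3},r+w+r^{2/3})$ and $(r-w+r^{2/3},r+w-r^{2/3})$, and define $$\widetilde Z=\sup_{v\in\mathbb{L}_{\mathrm{up}}}\left(X_v-\mathbb{E}[X_v]\right),\qquad X_v=X_{(1,1),v}.$$ There exist $c>0$, $\theta_0=\theta_0(K)$ and $r_0$ such that for all $\theta>\theta_0$ and $r>r_0$, $$\mathbb{P}\left(\widetilde Z>\theta r^{1/3}\right)\le\exp(-c\theta^\alpha).$$
   Context: Let $\{\xi_v:v\in\mathbb{Z}^2\}$ be i.i.d. random variables with a common law $\nu$ supported on $[0,\infty)$. A directed path is an up-right nearest-neighbour path in $\mathbb{Z}^2$, and its weight is $\ell(\gamma)=\sum_{u\in\gamma}\xi_u$. For $u\preceq v$ coordinatewise, $X_{u,v}=\max_{\gamma:u\to v}\ell(\gamma)$ over directed paths from $u$ to $v$ ($-\infty$ if none). For $r\in\mathbb{N}$, $z\in\mathbb{Z}$, $X_r^z=X_{(1,1),(r-z,r+z)}$ and $X_r=X_r^0$. It is assumed that $\mu=\lim_{r\to\infty}r^{-1}\mathbb{E}[X_r]<\infty$. Assumption (LS): there exist positive finite constants $\rho,G,H,g_1,g_2$ such that for all large enough $r$ and all $z\in[-\rho r,\rho r]$, $\mathbb{E}[X_r^z]\in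 \mu r-G\frac{z^2}{r}+\left[-H\frac{z^4}{r^3},0\right]+\left[-g_1r^{1/3},-g_2r^{1/3}\right]$. Assumptions (UT) and (LT): there exists $\alpha>0$ such that for every $\varepsilon>0$ there exist positive finite $c,\theta_0,r_0$ (depending only on $\varepsilon$) such that for all $r>r_0$, $\theta>\theta_0$ and $|z|\le(1-\varepsilon)r$: (UT) $\mathbb{P}(X_r^z-\mathbb{E}[X_r^z]>\theta r^{1/3})\le\exp(-c\theta^\alpha)$ and (LT) $\mathbb{P}(X_r^z-\mathbb{E}[X_r^z]<-\theta r^{1/3})\le\exp(-c\theta^\alpha)$. *)

theory Defs
  imports "HOL-Probability.Probability"
begin

type_synonym pt = "int \<times> int"

definition pt_le :: "pt \<Rightarrow> pt \<Rightarrow> bool" where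
  "pt_le u v \<longleftrightarrow> fst u \<le> fst v \<and> snd u \<le> snd v"

definition directed_path :: "pt list \<Rightarrow> pt \<Rightarrow> pt \<Rightarrow> bool" where
  "directed_path \<gamma> u v \<longleftrightarrow> \<gamma> \<noteq> [] \<and> hd \<gamma> = u \<and> last \<gamma> = v \<and>
     (\<forall>i. Suc i < length \<gamma> \<longrightarrow>
        \<gamma> ! Suc i = (fst (\<gamma> ! i) + 1, snd (\<gamma> ! i)) \<or>
        \<gamma> ! Suc i = (fst (\<gamma> ! i), snd (\<gamma> ! i) + 1))"

definition path_weight :: "(pt \<Rightarrow> 'w \<Rightarrow> real) \<Rightarrow> pt list \<Rightarrow> 'w \<Rightarrow> real" where
  "path_weight \<xi> \<gamma> \<omega> = (\<Sum>p\<leftarrow>\<gamma>. \<xi> p \<omega>)"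

text \<open>When no directed path exists (u not below v) the paper
  sets the value to -infinity; here the (irrelevant) value 0 is used and every place where
  the paper's convention matters is guarded explicitly by pt_le.\<close>
definition LPP :: "(pt \<Rightarrow> 'w \<Rightarrow> real) \<Rightarrow> pt \<Rightarrow> pt \<Rightarrow> 'w \<Rightarrow> real" where
  "LPP \<xi> u v \<omega> = (if pt_le u v
      then Max ((\<lambda>\<gamma>. path_weight \<xi> \<gamma> \<omega>) ` {\<gamma>. directed_path \<gamma> u v}) else 0)"

definition Xrz :: "(pt \<Rightarrow> 'w \<Rightarrow> real) \<Rightarrow> nat \<Rightarrow> int \<Rightarrow> 'w \<Rightarrow> real" where
  "Xrz \<xi> r z = LPP \<xi> (1,1) (int r - z, int r + z)"

definition Lup :: "nat \<Rightarrow> int \<Rightarrow> pt set" where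
  "Lup r w = {p. (real_of_int (fst p), real_of_int (snd p)) \<in>
     closed_segment (real r - real_of_int w - real r powr (2/3), real r + real_of_int w + real r powr (2/3))
                    (real r - real_of_int w + real r powr (2/3), real r + real_of_int w - real r powr (2/3))}"

definition Ztilde :: "'w measure \<Rightarrow> (pt \<Rightarrow> 'w \<Rightarrow> real) \<Rightarrow> nat \<Rightarrow> int \<Rightarrow> 'w \<Rightarrow> real" where
  "Ztilde M \<xi> r w \<omega> = (SUP v\<in>Lup r w. LPP \<xi> (1,1) v \<omega> - (\<integral>\<omega>'. LPP \<xi> (1,1) v \<omega>' \<partial>M))"

end

theory Submission
  imports Defs
begin

(* Every point of L_up is (r - z, r + z) with |z - w| <= r^(2/3). If X_(r-z,r+z) exceeds its mean by
   theta r^(1/3), continue from (r-z+1, r+z+1) to the endpoint (2r-2w, 2r+2w): this second leg is a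
   translate of X_r^(2w-z), it only uses weights strictly above the antidiagonal x + y = 2r, and by (LT)
   it falls below its mean by theta r^(1/3)/2 with probability at most 1/2. Taking for each sample the
   first z at which the excess occurs makes the events disjoint and independent of the second legs, so
   P(Ztilde > theta r^(1/3)) <= 2 P(X_(2r)^(2w) - E > theta r^(1/3)/4): by (LS) the means of the two legs
   add up to E X_(2r)^(2w) up to O(r^(1/3)), since the curvature terms cancel except for
   2G(z-w)^2/r <= 2G r^(1/3). Then (UT) at scale 2r gives the exponential bound. *)

section \<open>Directed paths and last-passage values\<close>

definition rect :: "pt \<Rightarrow> pt \<Rightarrow> pt set" where
  "rect u v = {p. pt_le u p \<and> pt_le p v}"

definition unit_step :: "pt \<Rightarrow> pt \<Rightarrow> bool" where
  "unit_step p q \<longleftrightarrow> q = (fst p + 1, snd p) \<or> q = (fst p, snd p + 1)"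

lemma finite_rect: "finite (rect u v)"
proof (rule finite_subset)
  show "rect u v \<subseteq> {fst u..fst v} \<times> {snd u..snd v}"
    by (auto simp: rect_def pt_le_def)
qed simp

lemma directed_path_Nil [simp]: "\<not> directed_path [] u v"
  by (simp add: directed_path_def)

lemma directed_path_singleton [simp]: "directed_path [p] u v \<longleftrightarrow> p = u \<and> p = v"
  by (auto simp: directed_path_def)

lemma directed_path_hd: "directed_path (p # \<gamma>) u v \<Longrightarrow> p = u"
  by (simp add: directed_path_def)

lemma directed_path_iff_unit_steps:
  "directed_path \<gamma> u v \<longleftrightarrow> \<gamma> \<noteq> [] \<and> hd \<gamma> = u \<and> last \<gamma> = v \<and>
     (\<forall>i. Suc i < length \<gamma> \<longrightarrow> unit_step (\<gamma> ! i) (\<gamma> ! Suc i))"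
  by (simp add: directed_path_def unit_step_def)

lemma directed_path_Cons_Cons:
  "directed_path (p # q # \<gamma>) u v \<longleftrightarrow> p = u \<and> unit_step p q \<and> directed_path (q # \<gamma>) q v"
proof -
  have "(\<forall>i. Suc i < length (p # q # \<gamma>) \<longrightarrow> unit_step ((p # q # \<gamma>) ! i) ((p # q # \<gamma>) ! Suc i))
      \<longleftrightarrow> unit_step p q \<and> (\<forall>i. Suc i < length (q # \<gamma>) \<longrightarrow> unit_step ((q # \<gamma>) ! i) ((q # \<gamma>) ! Suc i))"
    by (metis (no_types, lifting) Suc_less_eq length_Cons nth_Cons_0 nth_Cons_Suc not0_implies_Suc
        zero_less_Suc)
  then show ?thesis
    by (simp add: directed_path_iff_unit_steps) blast
qed

lemma directed_path_endpoints:
  assumes "directed_path \<gamma> u v"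
  shows "pt_le u v" and "set \<gamma> \<subseteq> rect u v"
    and "int (length \<gamma>) = fst v + snd v - fst u - snd u + 1"
proof -
  have "pt_le u v \<and> set \<gamma> \<subseteq> rect u v \<and> int (length \<gamma>) = fst v + snd v - fst u - snd u + 1"
    using assms
  proof (induction \<gamma> arbitrary: u)
    case (Cons p \<gamma>)
    show ?case
    proof (cases \<gamma>)
      case Nil
      then show ?thesis using Cons.prems by (auto simp: rect_def pt_le_def)
    next
      case (Cons q \<gamma>')
      then have "p = u" "unit_step p q" "directed_path \<gamma> q v"
        using Cons.prems by (auto simp: directed_path_Cons_Cons)
      moreover note Cons.IH[OF \<open>directed_path \<gamma> q v\<close>]
      ultimately show ?thesis by (auto simp: unit_step_def rect_def pt_le_def)
    qed
  qed simp
  then show "pt_le u v" "set \<gamma> \<subseteq> rect u v" "int (length \<gamma>) = fst v + snd v - fst u - snd u + 1"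
    by auto
qed

lemma finite_directed_paths: "finite {\<gamma>. directed_path \<gamma> u v}"
proof (rule finite_subset)
  show "{\<gamma>. directed_path \<gamma> u v} \<subseteq>
      {\<gamma>. set \<gamma> \<subseteq> rect u v \<and> length \<gamma> = nat (fst v + snd v - fst u - snd u + 1)}"
  proof (intro subsetI CollectI, elim CollectE)
    fix \<gamma> assume "directed_path \<gamma> u v"
    from directed_path_endpoints[OF this]
    show "set \<gamma> \<subseteq> rect u v \<and> length \<gamma> = nat (fst v + snd v - fst u - snd u + 1)"
      by auto
  qed
qed (intro finite_lists_length_eq finite_rect)

lemma directed_path_exists:
  assumes "pt_le u v"
  obtains \<gamma> where "directed_path \<gamma> u v"
proof -
  have "\<exists>\<gamma>. directed_path \<gamma> u v"
    using assms
  proof (induction "nat (fst v + snd v - fst u - snd u)" arbitrary: u)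
    case 0
    then have "u = v" by (auto simp: pt_le_def prod_eq_iff)
    then show ?case by (metis directed_path_singleton)
  next
    case (Suc n)
    define q where "q = (if fst u < fst v then (fst u + 1, snd u) else (fst u, snd u + 1))"
    have "pt_le q v" "n = nat (fst v + snd v - fst q - snd q)"
      using Suc.prems Suc.hyps(2) by (auto simp: q_def pt_le_def)
    then obtain \<gamma> where \<gamma>: "directed_path \<gamma> q v" using Suc.hyps(1) by blast
    then obtain \<gamma>' where "\<gamma> = q # \<gamma>'" using directed_path_hd by (cases \<gamma>) auto
    then have "directed_path (u # \<gamma>) u v"
      using \<gamma> by (simp add: directed_path_Cons_Cons unit_step_def q_def)
    then show ?case by blast
  qed
  then show ?thesis using that by blast
qed

lemma directed_path_append:
  assumes "directed_path \<gamma>\<^sub>1 u v" and "directed_path \<gamma>\<^sub>2 v' w" and "unit_step v v'"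
  shows "directed_path (\<gamma>\<^sub>1 @ \<gamma>\<^sub>2) u w"
  using assms(1)
proof (induction \<gamma>\<^sub>1 arbitrary: u)
  case (Cons p \<gamma>)
  show ?case
  proof (cases \<gamma>)
    case Nil
    obtain q \<gamma>' where "\<gamma>\<^sub>2 = q # \<gamma>'" using assms(2) by (cases \<gamma>\<^sub>2) auto
    moreover have "q = v'" using assms(2) calculation directed_path_hd by blast
    ultimately show ?thesis
      using Cons.prems Nil assms(2,3) by (auto simp: directed_path_Cons_Cons)
  next
    case (Cons q \<gamma>')
    then show ?thesis
      using Cons.prems Cons.IH by (auto simp: directed_path_Cons_Cons)
  qed
qed simp

lemma directed_path_translate:
  "directed_path \<gamma> u v \<Longrightarrow> directed_path (map ((+) s) \<gamma>) (s + u) (s + v)"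
proof (induction \<gamma> arbitrary: u)
  case (Cons p \<gamma>)
  show ?case
  proof (cases \<gamma>)
    case Nil
    then show ?thesis using Cons.prems by auto
  next
    case (Cons q \<gamma>')
    then show ?thesis
      using Cons.prems Cons.IH by (auto simp: directed_path_Cons_Cons unit_step_def prod_eq_iff)
  qed
qed simp

lemma path_weight_le_LPP:
  assumes "directed_path \<gamma> u v"
  shows "path_weight \<xi> \<gamma> \<omega> \<le> LPP \<xi> u v \<omega>"
  using assms directed_path_endpoints(1)[OF assms]
  by (auto simp: LPP_def intro!: Max_ge finite_imageI finite_directed_paths)

lemma LPP_attained:
  assumes "pt_le u v"
  obtains \<gamma> where "directed_path \<gamma> u v" and "LPP \<xi> u v \<omega> = path_weight \<xi> \<gamma> \<omega>"
proof -
  have "{\<gamma>. directed_path \<gamma> u v} \<noteq> {}"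
    using directed_path_exists[OF assms] by blast
  then have "LPP \<xi> u v \<omega> \<in> (\<lambda>\<gamma>. path_weight \<xi> \<gamma> \<omega>) ` {\<gamma>. directed_path \<gamma> u v}"
    using assms by (simp add: LPP_def finite_directed_paths)
  then show ?thesis using that by blast
qed

text \<open>The two optimal paths are joined through the corner \<open>v + (1,0)\<close>, whose weight is added.\<close>
lemma LPP_superadditive:
  assumes "pt_le u v" and "pt_le (v + (1,1)) w" and "0 \<le> \<xi> (v + (1,0)) \<omega>"
  shows "LPP \<xi> u v \<omega> + LPP \<xi> (v + (1,1)) w \<omega> \<le> LPP \<xi> u w \<omega>"
proof -
  obtain \<gamma>\<^sub>1 where \<gamma>\<^sub>1: "directed_path \<gamma>\<^sub>1 u v" "LPP \<xi> u v \<omega> = path_weight \<xi> \<gamma>\<^sub>1 \<omega>"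
    using LPP_attained[OF assms(1)] .
  obtain \<gamma>\<^sub>2 where \<gamma>\<^sub>2: "directed_path \<gamma>\<^sub>2 (v + (1,1)) w"
      "LPP \<xi> (v + (1,1)) w \<omega> = path_weight \<xi> \<gamma>\<^sub>2 \<omega>"
    using LPP_attained[OF assms(2)] .
  obtain \<gamma>\<^sub>2' where "\<gamma>\<^sub>2 = (v + (1,1)) # \<gamma>\<^sub>2'"
    using \<gamma>\<^sub>2(1) directed_path_hd by (cases \<gamma>\<^sub>2) auto
  then have tail: "directed_path ((v + (1,0)) # \<gamma>\<^sub>2) (v + (1,0)) w"
    using \<gamma>\<^sub>2(1) by (simp add: directed_path_Cons_Cons unit_step_def prod_eq_iff)
  then have "directed_path (\<gamma>\<^sub>1 @ (v + (1,0)) # \<gamma>\<^sub>2) u w"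
    using directed_path_append[OF \<gamma>\<^sub>1(1) tail] by (simp add: unit_step_def prod_eq_iff)
  then have "path_weight \<xi> (\<gamma>\<^sub>1 @ (v + (1,0)) # \<gamma>\<^sub>2) \<omega> \<le> LPP \<xi> u w \<omega>"
    by (rule path_weight_le_LPP)
  then show ?thesis
    using \<gamma>\<^sub>1(2) \<gamma>\<^sub>2(2) assms(3) by (simp add: path_weight_def)
qed

lemma LPP_cong:
  assumes "\<And>p. p \<in> rect u v \<Longrightarrow> \<xi> p \<omega> = \<xi>' p \<omega>'"
  shows "LPP \<xi> u v \<omega> = LPP \<xi>' u v \<omega>'"
proof -
  have "path_weight \<xi> \<gamma> \<omega> = path_weight \<xi>' \<gamma> \<omega>'" if "directed_path \<gamma> u v" for \<gamma>
    using assms directed_path_endpoints(2)[OF that] unfolding path_weight_def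
    by (intro arg_cong[where f = sum_list] map_cong) auto
  then have "(\<lambda>\<gamma>. path_weight \<xi> \<gamma> \<omega>) ` {\<gamma>. directed_path \<gamma> u v} =
      (\<lambda>\<gamma>. path_weight \<xi>' \<gamma> \<omega>') ` {\<gamma>. directed_path \<gamma> u v}"
    by (intro image_cong) auto
  then show ?thesis
    unfolding LPP_def by simp
qed

lemma LPP_translate: "LPP \<xi> (s + u) (s + v) \<omega> = LPP (\<lambda>p. \<xi> (s + p)) u v \<omega>"
proof -
  have paths: "{\<gamma>. directed_path \<gamma> (s + u) (s + v)} = map ((+) s) ` {\<gamma>. directed_path \<gamma> u v}"
  proof (intro equalityI subsetI)
    fix \<gamma> assume "\<gamma> \<in> {\<gamma>. directed_path \<gamma> (s + u) (s + v)}"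
    then have "directed_path (map ((+) (- s)) \<gamma>) u v"
      using directed_path_translate[of \<gamma> "s + u" "s + v" "- s"] by simp
    moreover have "\<gamma> = map ((+) s) (map ((+) (- s)) \<gamma>)"
      by (simp add: map_idI)
    ultimately show "\<gamma> \<in> map ((+) s) ` {\<gamma>. directed_path \<gamma> u v}" by blast
  qed (auto intro: directed_path_translate)
  have "pt_le (s + u) (s + v) \<longleftrightarrow> pt_le u v"
    by (auto simp: pt_le_def)
  then show ?thesis
    unfolding LPP_def paths image_image by (simp add: path_weight_def o_def)
qed

section \<open>Measurability and independence\<close>

definition lpp_weights :: "pt \<Rightarrow> pt \<Rightarrow> (pt \<Rightarrow> real) \<Rightarrow> real" where
  "lpp_weights u v x = LPP (\<lambda>p _. x p) u v ()"

lemma LPP_eq_lpp_weights: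
  assumes "rect u v \<subseteq> S"
  shows "LPP \<xi> u v \<omega> = lpp_weights u v (\<lambda>p\<in>S. \<xi> p \<omega>)"
  unfolding lpp_weights_def using assms by (intro LPP_cong) auto

lemma borel_measurable_sum_list_components:
  "set \<gamma> \<subseteq> S \<Longrightarrow> (\<lambda>x. \<Sum>p\<leftarrow>\<gamma>. x p :: real) \<in> borel_measurable (PiM S (\<lambda>_. borel))"
  by (induction \<gamma>) (auto intro!: borel_measurable_add measurable_component_singleton)

lemma borel_measurable_lpp_weights:
  assumes "rect u v \<subseteq> S"
  shows "lpp_weights u v \<in> borel_measurable (PiM S (\<lambda>_. borel))"
proof (cases "pt_le u v")
  case True
  have "(\<lambda>x. \<Sum>p\<leftarrow>\<gamma>. x p :: real) \<in> borel_measurable (PiM S (\<lambda>_. borel))"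
    if "\<gamma> \<in> {\<gamma>. directed_path \<gamma> u v}" for \<gamma>
    using that directed_path_endpoints(2)[of \<gamma> u v] assms
    by (intro borel_measurable_sum_list_components) auto
  then have "(\<lambda>x :: pt \<Rightarrow> real. Max ((\<lambda>\<gamma>. \<Sum>p\<leftarrow>\<gamma>. x p) ` {\<gamma>. directed_path \<gamma> u v}))
      \<in> borel_measurable (PiM S (\<lambda>_. borel))"
    by (intro borel_measurable_Max finite_directed_paths)
  moreover have "lpp_weights u v = (\<lambda>x. Max ((\<lambda>\<gamma>. \<Sum>p\<leftarrow>\<gamma>. x p) ` {\<gamma>. directed_path \<gamma> u v}))"
    using True by (simp add: lpp_weights_def LPP_def path_weight_def fun_eq_iff)
  ultimately show ?thesis by simp
next
  case False
  then have "lpp_weights u v = (\<lambda>_. 0)"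
    by (simp add: lpp_weights_def LPP_def fun_eq_iff)
  then show ?thesis by simp
qed

lemma borel_measurable_LPP:
  assumes "\<And>p. \<xi> p \<in> borel_measurable M"
  shows "LPP \<xi> u v \<in> borel_measurable M"
proof -
  have "(\<lambda>\<omega>. \<lambda>p\<in>rect u v. \<xi> p \<omega>) \<in> measurable M (PiM (rect u v) (\<lambda>_. borel))"
    using assms by (intro measurable_restrict) auto
  moreover have "LPP \<xi> u v = (\<lambda>\<omega>. lpp_weights u v (\<lambda>p\<in>rect u v. \<xi> p \<omega>))"
    by (intro ext LPP_eq_lpp_weights) simp
  ultimately show ?thesis
    using borel_measurable_lpp_weights[of u v "rect u v"] by simp
qed

lemma (in prob_space) indep_vars_reindex:
  assumes ind: "indep_vars M' X I" and f: "inj_on f J" "f ` J \<subseteq> I"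
  shows "indep_vars (\<lambda>j. M' (f j)) (\<lambda>j. X (f j)) J"
  unfolding indep_vars_def2
proof (intro conjI ballI)
  fix j assume "j \<in> J"
  then show "random_variable (M' (f j)) (X (f j))"
    using ind f(2) unfolding indep_vars_def2 by auto
next
  have I: "indep_sets (\<lambda>i. {X i -` A \<inter> space M |A. A \<in> sets (M' i)}) I"
    using ind unfolding indep_vars_def2 by auto
  show "indep_sets (\<lambda>j. {X (f j) -` A \<inter> space M |A. A \<in> sets (M' (f j))}) J"
  proof (rule indep_setsI)
    fix j assume "j \<in> J"
    then show "{X (f j) -` A \<inter> space M |A. A \<in> sets (M' (f j))} \<subseteq> events"
      using I f(2) unfolding indep_sets_def by auto
  next
    fix A K assume K: "K \<noteq> {}" "K \<subseteq> J" "finite K"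
      and A: "\<forall>j\<in>K. A j \<in> {X (f j) -` A \<inter> space M |A. A \<in> sets (M' (f j))}"
    define B where "B i = A (the_inv_into J f i)" for i
    have inv: "the_inv_into J f (f j) = j" if "j \<in> K" for j
      using f(1) K(2) that by (auto intro: the_inv_into_f_f)
    have "prob (\<Inter>i\<in>f ` K. B i) = (\<Prod>i\<in>f ` K. prob (B i))"
      using K A f(2) inv by (intro indep_setsD[OF I]) (auto simp: B_def image_subset_iff subset_iff)
    moreover have "(\<Prod>i\<in>f ` K. prob (B i)) = (\<Prod>j\<in>K. prob (A j))"
      using f(1) K(2) inv by (subst prod.reindex) (auto simp: B_def intro: inj_on_subset)
    ultimately show "prob (\<Inter>j\<in>K. A j) = (\<Prod>j\<in>K. prob (A j))"
      using inv by (simp add: B_def)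
  qed
qed

lemma UN_diff_earlier_eq:
  fixes S :: "'i::linorder \<Rightarrow> 'a set"
  assumes "finite Z"
  shows "(\<Union>z\<in>Z. S z - (\<Union>z'\<in>{z'\<in>Z. z' < z}. S z')) = (\<Union>z\<in>Z. S z)"
proof (intro equalityI subsetI)
  fix x assume "x \<in> (\<Union>z\<in>Z. S z)"
  then have "{z\<in>Z. x \<in> S z} \<noteq> {}" by auto
  moreover define z where "z = Min {z\<in>Z. x \<in> S z}"
  ultimately have "z \<in> Z" "x \<in> S z" "\<And>z'. z' \<in> Z \<Longrightarrow> x \<in> S z' \<Longrightarrow> z \<le> z'"
    using Min_in[of "{z\<in>Z. x \<in> S z}"] Min_le[of "{z\<in>Z. x \<in> S z}"] assms by auto
  then show "x \<in> (\<Union>z\<in>Z. S z - (\<Union>z'\<in>{z'\<in>Z. z' < z}. S z'))"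
    by (auto simp: not_less[symmetric])
qed auto

lemma disjoint_family_on_diff_earlier:
  fixes S :: "'i::linorder \<Rightarrow> 'a set"
  shows "disjoint_family_on (\<lambda>z. S z - (\<Union>z'\<in>{z'\<in>Z. z' < z}. S z')) Z"
  unfolding disjoint_family_on_def
proof (intro ballI impI)
  fix z z' assume "z \<in> Z" "z' \<in> Z" "z \<noteq> z'"
  then consider "z < z'" "z \<in> Z" | "z' < z" "z' \<in> Z" by fastforce
  then show "(S z - (\<Union>y\<in>{y\<in>Z. y < z}. S y)) \<inter> (S z' - (\<Union>y\<in>{y\<in>Z. y < z'}. S y)) = {}"
    by cases blast+
qed

text \<open>Disjointify by the first index \<open>z\<close> with \<open>Y \<in> SE z\<close>: the pieces are still events of \<open>Y\<close>
  alone, hence independent of \<open>W \<in> SB z\<close>.\<close>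
lemma (in prob_space) prob_Union_le_of_indep_var:
  fixes Z :: "'i::linorder set"
  assumes Z: "finite Z" and ind: "indep_var N Y N' W"
    and SE: "\<And>z. z \<in> Z \<Longrightarrow> SE z \<in> sets N" and SB: "\<And>z. z \<in> Z \<Longrightarrow> SB z \<in> sets N'"
    and p: "\<And>z. z \<in> Z \<Longrightarrow> p \<le> prob {\<omega> \<in> space M. W \<omega> \<in> SB z}"
    and F: "F \<in> events"
    and cover: "AE \<omega> in M. \<forall>z\<in>Z. Y \<omega> \<in> SE z \<and> W \<omega> \<in> SB z \<longrightarrow> \<omega> \<in> F"
  shows "p * prob (\<Union>z\<in>Z. {\<omega> \<in> space M. Y \<omega> \<in> SE z}) \<le> prob F"
proof -
  have Y: "random_variable N Y" and W: "random_variable N' W"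
    using ind by (simp_all add: indep_var_eq)
  define SA where "SA z = SE z - (\<Union>z'\<in>{z'\<in>Z. z' < z}. SE z')" for z
  define A where "A z = {\<omega> \<in> space M. Y \<omega> \<in> SA z}" for z
  define B where "B z = {\<omega> \<in> space M. W \<omega> \<in> SB z}" for z
  have SA: "SA z \<in> sets N" if "z \<in> Z" for z
    unfolding SA_def using SE Z that by (intro sets.Diff sets.finite_UN) auto
  have A: "A z \<in> events" if "z \<in> Z" for z
    unfolding A_def using measurable_sets[OF Y SA[OF that]] by (simp add: Int_def conj_commute)
  have B: "B z \<in> events" if "z \<in> Z" for z
    unfolding B_def using measurable_sets[OF W SB[OF that]] by (simp add: Int_def conj_commute)
  have disjoint: "disjoint_family_on A Z"
    using disjoint_family_on_diff_earlier[of SE Z]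
    unfolding A_def SA_def disjoint_family_on_def by blast
  have "(\<Union>z\<in>Z. {\<omega> \<in> space M. Y \<omega> \<in> SE z}) = (\<Union>z\<in>Z. A z)"
    using UN_diff_earlier_eq[OF Z, of SE] unfolding A_def SA_def by blast
  then have "p * prob (\<Union>z\<in>Z. {\<omega> \<in> space M. Y \<omega> \<in> SE z}) = (\<Sum>z\<in>Z. p * prob (A z))"
    using Z A disjoint by (simp add: finite_measure_finite_Union sum_distrib_left image_subset_iff)
  also have "\<dots> \<le> (\<Sum>z\<in>Z. prob (A z \<inter> B z))"
  proof (rule sum_mono)
    fix z assume z: "z \<in> Z"
    have "A z \<inter> B z = (\<lambda>\<omega>. (Y \<omega>, W \<omega>)) -` (SA z \<times> SB z) \<inter> space M"
      and "A z = Y -` SA z \<inter> space M" and "B z = W -` SB z \<inter> space M"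
      by (auto simp: A_def B_def)
    then have "prob (A z \<inter> B z) = prob (A z) * prob (B z)"
      using indep_varD[OF ind SA[OF z] SB[OF z]] by simp
    moreover have "p * prob (A z) \<le> prob (B z) * prob (A z)"
      using p[OF z] unfolding B_def by (intro mult_right_mono) auto
    ultimately show "p * prob (A z) \<le> prob (A z \<inter> B z)"
      by (simp add: mult.commute)
  qed
  also have "\<dots> = prob (\<Union>z\<in>Z. A z \<inter> B z)"
  proof (rule finite_measure_finite_Union[symmetric, OF Z])
    show "(\<lambda>z. A z \<inter> B z) ` Z \<subseteq> events" using A B by auto
    show "disjoint_family_on (\<lambda>z. A z \<inter> B z) Z"
      using disjoint unfolding disjoint_family_on_def by blast
  qed
  also have "\<dots> \<le> prob F"
  proof (rule finite_measure_mono_AE[OF _ F])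
    show "AE \<omega> in M. \<omega> \<in> (\<Union>z\<in>Z. A z \<inter> B z) \<longrightarrow> \<omega> \<in> F"
      using cover by eventually_elim (auto simp: A_def B_def SA_def)
  qed
  finally show ?thesis .
qed

section \<open>The concatenation bound\<close>

definition window :: "nat \<Rightarrow> int \<Rightarrow> int set" where
  "window r w = {z. \<bar>real_of_int (z - w)\<bar> \<le> real r powr (2/3)}"

lemma finite_window: "finite (window r w)"
proof (rule finite_subset)
  show "window r w \<subseteq> {w - \<lceil>real r powr (2/3)\<rceil> .. w + \<lceil>real r powr (2/3)\<rceil>}"
    unfolding window_def by (auto simp: abs_le_iff) linarith+
qed simp

lemma Lup_subset_window: "Lup r w \<subseteq> (\<lambda>z. (int r - z, int r + z)) ` window r w"
proof
  fix v assume "v \<in> Lup r w"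
  then obtain u :: real where u: "0 \<le> u" "u \<le> 1"
    and fst_v: "real_of_int (fst v) = real r - real_of_int w - real r powr (2/3) + 2 * u * real r powr (2/3)"
    and snd_v: "real_of_int (snd v) = real r + real_of_int w + real r powr (2/3) - 2 * u * real r powr (2/3)"
    unfolding Lup_def closed_segment_def by (auto simp: algebra_simps)
  define z where "z = int r - fst v"
  have "snd v = int r + z"
    using fst_v snd_v unfolding z_def by (simp add: of_int_eq_iff[symmetric])
  moreover have "\<bar>real_of_int (z - w)\<bar> \<le> real r powr (2/3)"
    using fst_v u mult_left_le_one_le[of "real r powr (2/3)" u] unfolding z_def by (simp add: abs_le_iff)
  ultimately show "v \<in> (\<lambda>z. (int r - z, int r + z)) ` window r w"
    unfolding window_def z_def by (intro image_eqI[of _ _ z]) (auto simp: z_def prod_eq_iff)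
qed

lemma antidiagonal_mem_Lup: "(int r - w, int r + w) \<in> Lup r w"
  unfolding Lup_def closed_segment_def
  by (auto intro!: exI[of _ "1/2"] simp: prod_eq_iff field_simps)

lemma Ztilde_gt_subset:
  "{\<omega> \<in> space M. Ztilde M \<xi> r w \<omega> > t} \<subseteq>
    (\<Union>z\<in>window r w. {\<omega> \<in> space M. Xrz \<xi> r z \<omega> - (\<integral>\<omega>'. Xrz \<xi> r z \<omega>' \<partial>M) > t})"
proof safe
  fix \<omega> assume "\<omega> \<in> space M" and gt: "t < Ztilde M \<xi> r w \<omega>"
  let ?f = "\<lambda>v. LPP \<xi> (1,1) v \<omega> - (\<integral>\<omega>'. LPP \<xi> (1,1) v \<omega>' \<partial>M)"
  have "finite (Lup r w)"
    by (rule finite_surj[OF finite_window Lup_subset_window])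
  moreover have "Lup r w \<noteq> {}"
    using antidiagonal_mem_Lup by blast
  ultimately obtain v where "v \<in> Lup r w" and "t < ?f v"
    using gt less_cSUP_iff[where A = "Lup r w" and f = ?f] unfolding Ztilde_def by auto
  moreover obtain z where "z \<in> window r w" and "v = (int r - z, int r + z)"
    using Lup_subset_window \<open>v \<in> Lup r w\<close> by blast
  ultimately show "\<omega> \<in> (\<Union>z\<in>window r w. {\<omega> \<in> space M. Xrz \<xi> r z \<omega> - (\<integral>\<omega>'. Xrz \<xi> r z \<omega>' \<partial>M) > t})"
    using \<open>\<omega> \<in> space M\<close> by (auto simp: Xrz_def)
qed

locale iid_lpp = prob_space M for M :: "'w measure" +
  fixes \<xi> :: "pt \<Rightarrow> 'w \<Rightarrow> real" and \<nu> :: "real measure"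
  assumes iid: "indep_vars (\<lambda>_. borel) \<xi> UNIV"
    and identical_law: "\<And>p. distr M borel (\<xi> p) = \<nu>"
    and nonneg_law: "emeasure \<nu> {..<0} = 0"
begin

lemma random_variable_weight: "random_variable borel (\<xi> p)"
  using iid unfolding indep_vars_def2 by (cases p) auto

lemma random_variable_LPP [measurable]: "LPP \<xi> u v \<in> borel_measurable M"
  using random_variable_weight by (rule borel_measurable_LPP)

lemma AE_weights_nonneg: "AE \<omega> in M. \<forall>p. 0 \<le> \<xi> p \<omega>"
proof -
  have "AE \<omega> in M. 0 \<le> \<xi> p \<omega>" for p
  proof (rule AE_I')
    have "emeasure M (\<xi> p -` {..<0} \<inter> space M) = emeasure (distr M borel (\<xi> p)) {..<0}"
      using random_variable_weight by (simp add: emeasure_distr)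
    then show "\<xi> p -` {..<0} \<inter> space M \<in> null_sets M"
      using identical_law nonneg_law random_variable_weight by (auto simp: null_sets_def)
  qed auto
  then show ?thesis by (simp add: AE_all_countable)
qed

lemma AE_LPP_superadditive:
  "AE \<omega> in M. \<forall>u v w. pt_le u v \<longrightarrow> pt_le (v + (1,1)) w \<longrightarrow>
    LPP \<xi> u v \<omega> + LPP \<xi> (v + (1,1)) w \<omega> \<le> LPP \<xi> u w \<omega>"
  using AE_weights_nonneg by eventually_elim (blast intro: LPP_superadditive)

lemma distr_restrict_translate:
  assumes "S \<noteq> {}"
  shows "distr M (PiM S (\<lambda>_. borel)) (\<lambda>\<omega>. \<lambda>p\<in>S. \<xi> (s + p) \<omega>) = PiM S (\<lambda>_. \<nu>)"
proof -
  have "indep_vars (\<lambda>_. borel) (\<lambda>p. \<xi> (s + p)) S"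
    using indep_vars_reindex[OF iid, of "(+) s" S] by (simp add: inj_on_def)
  then show ?thesis
    using indep_vars_iff_distr_eq_PiM[OF assms random_variable_weight] identical_law by simp
qed

lemma prob_LPP_translate:
  assumes "pt_le u v" and "A \<in> sets borel"
  shows "prob {\<omega> \<in> space M. LPP \<xi> (s + u) (s + v) \<omega> \<in> A} = prob {\<omega> \<in> space M. LPP \<xi> u v \<omega> \<in> A}"
proof -
  have nonempty: "rect u v \<noteq> {}"
    using assms(1) by (auto simp: rect_def pt_le_def)
  have "prob {\<omega> \<in> space M. LPP \<xi> (t + u) (t + v) \<omega> \<in> A} =
      measure (PiM (rect u v) (\<lambda>_. \<nu>)) (lpp_weights u v -` A \<inter> space (PiM (rect u v) (\<lambda>_. borel)))"
    for t
  proof -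
    let ?Y = "\<lambda>\<omega>. \<lambda>p\<in>rect u v. \<xi> (t + p) \<omega>"
    have Y: "?Y \<in> measurable M (PiM (rect u v) (\<lambda>_. borel))"
      using random_variable_weight by (intro measurable_restrict) auto
    have f: "lpp_weights u v \<in> borel_measurable (PiM (rect u v) (\<lambda>_. borel))"
      by (simp add: borel_measurable_lpp_weights)
    have "{\<omega> \<in> space M. LPP \<xi> (t + u) (t + v) \<omega> \<in> A} = ?Y -` (lpp_weights u v -` A \<inter> space (PiM (rect u v) (\<lambda>_. borel))) \<inter> space M"
      using measurable_space[OF Y] by (auto simp: LPP_translate LPP_eq_lpp_weights[of u v "rect u v"])
    also have "prob \<dots> = measure (distr M (PiM (rect u v) (\<lambda>_. borel)) ?Y) (lpp_weights u v -` A \<inter> space (PiM (rect u v) (\<lambda>_. borel)))"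
      using measurable_sets[OF f assms(2)] by (simp add: measure_distr[OF Y])
    finally show ?thesis
      by (simp only: distr_restrict_translate[OF nonempty])
  qed
  from this[of s] this[of 0] show ?thesis by simp
qed

text \<open>The first legs \<open>u \<rightarrow> v z\<close> use only weights on or below the antidiagonal
  \<open>fst + snd = n\<close>, the second legs \<open>v z + (1,1) \<rightarrow> s\<close> only weights above it.\<close>
lemma prob_Union_LPP_gt_le:
  fixes Z :: "'i::linorder set" and v :: "'i \<Rightarrow> pt"
  assumes Z: "finite Z"
    and below: "\<And>z. z \<in> Z \<Longrightarrow> pt_le u (v z)"
    and antidiagonal: "\<And>z. z \<in> Z \<Longrightarrow> fst (v z) + snd (v z) = n"
    and above: "\<And>z. z \<in> Z \<Longrightarrow> pt_le (v z + (1,1)) s"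
    and lower_tail: "\<And>z. z \<in> Z \<Longrightarrow> prob {\<omega> \<in> space M. LPP \<xi> (v z + (1,1)) s \<omega> - e' z < - h} \<le> 1 - p"
    and means: "\<And>z. z \<in> Z \<Longrightarrow> es + T \<le> e z + e' z + t - h"
  shows "p * prob (\<Union>z\<in>Z. {\<omega> \<in> space M. LPP \<xi> u (v z) \<omega> - e z > t})
    \<le> prob {\<omega> \<in> space M. LPP \<xi> u s \<omega> - es > T}"
proof -
  define L where "L = {q :: pt. fst q + snd q \<le> n}"
  define U where "U = {q :: pt. n < fst q + snd q}"
  let ?Y = "\<lambda>\<omega>. \<lambda>q\<in>L. \<xi> q \<omega>" and ?W = "\<lambda>\<omega>. \<lambda>q\<in>U. \<xi> q \<omega>"
  define SE where "SE z = {x \<in> space (PiM L (\<lambda>_. borel)). t < lpp_weights u (v z) x - e z}" for z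
  define SB where "SB z = {y \<in> space (PiM U (\<lambda>_. borel)). - h \<le> lpp_weights (v z + (1,1)) s y - e' z}" for z
  have rect_L: "rect u (v z) \<subseteq> L" if "z \<in> Z" for z
    using antidiagonal[OF that] by (auto simp: rect_def L_def pt_le_def)
  have rect_U: "rect (v z + (1,1)) s \<subseteq> U" if "z \<in> Z" for z
    using antidiagonal[OF that] by (auto simp: rect_def U_def pt_le_def)
  have events_E: "{\<omega> \<in> space M. ?Y \<omega> \<in> SE z} = {\<omega> \<in> space M. LPP \<xi> u (v z) \<omega> - e z > t}"
    if "z \<in> Z" for z
    by (auto simp: SE_def space_PiM LPP_eq_lpp_weights[OF rect_L[OF that]])
  have events_B: "{\<omega> \<in> space M. ?W \<omega> \<in> SB z} =
      space M - {\<omega> \<in> space M. LPP \<xi> (v z + (1,1)) s \<omega> - e' z < - h}" if "z \<in> Z" for z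
    by (auto simp: SB_def space_PiM LPP_eq_lpp_weights[OF rect_U[OF that]])
  have "p * prob (\<Union>z\<in>Z. {\<omega> \<in> space M. ?Y \<omega> \<in> SE z}) \<le> prob {\<omega> \<in> space M. LPP \<xi> u s \<omega> - es > T}"
  proof (rule prob_Union_le_of_indep_var[OF Z])
    show "indep_var (PiM L (\<lambda>_. borel)) ?Y (PiM U (\<lambda>_. borel)) ?W"
      by (rule indep_var_restrict[OF iid]) (auto simp: L_def U_def)
    show "SE z \<in> sets (PiM L (\<lambda>_. borel))" if "z \<in> Z" for z
      using borel_measurable_lpp_weights[OF rect_L[OF that]] unfolding SE_def by measurable
    show "SB z \<in> sets (PiM U (\<lambda>_. borel))" if "z \<in> Z" for z
      using borel_measurable_lpp_weights[OF rect_U[OF that]] unfolding SB_def by measurable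
    show "p \<le> prob {\<omega> \<in> space M. ?W \<omega> \<in> SB z}" if "z \<in> Z" for z
      using lower_tail[OF that] by (simp add: events_B[OF that] prob_compl)
    show "{\<omega> \<in> space M. LPP \<xi> u s \<omega> - es > T} \<in> events"
      by measurable
    show "AE \<omega> in M. \<forall>z\<in>Z. ?Y \<omega> \<in> SE z \<and> ?W \<omega> \<in> SB z \<longrightarrow> \<omega> \<in> {\<omega> \<in> space M. LPP \<xi> u s \<omega> - es > T}"
      using AE_LPP_superadditive AE_space
    proof eventually_elim
      case (elim \<omega>)
      show ?case
      proof (intro ballI impI)
        fix z assume z: "z \<in> Z" and "?Y \<omega> \<in> SE z \<and> ?W \<omega> \<in> SB z"
        then have "\<omega> \<in> {\<omega> \<in> space M. ?Y \<omega> \<in> SE z}" and "\<omega> \<in> {\<omega> \<in> space M. ?W \<omega> \<in> SB z}"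
          using elim(2) by auto
        then have "LPP \<xi> u (v z) \<omega> - e z > t" and "LPP \<xi> (v z + (1,1)) s \<omega> - e' z \<ge> - h"
          unfolding events_E[OF z] events_B[OF z] by auto
        moreover have "LPP \<xi> u (v z) \<omega> + LPP \<xi> (v z + (1,1)) s \<omega> \<le> LPP \<xi> u s \<omega>"
          using elim(1) below[OF z] above[OF z] by blast
        ultimately show "\<omega> \<in> {\<omega> \<in> space M. LPP \<xi> u s \<omega> - es > T}"
          using means[OF z] elim(2) by auto
      qed
    qed
  qed
  then show ?thesis
    by (simp add: events_E cong: SUP_cong)
qed

text \<open>The concatenation bound in the paper's coordinates: a point \<open>(r - z, r + z)\<close> of the
  window is joined to the endpoint \<open>(2r - 2w, 2r + 2w)\<close> by a translate of \<open>X\<^sub>r\<^sup>2\<^sup>w\<^sup>-\<^sup>z\<close>.\<close>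
lemma prob_Ztilde_gt_le:
  assumes inside: "\<And>z. z \<in> window r w \<Longrightarrow> \<bar>z\<bar> < int r \<and> \<bar>2 * w - z\<bar> < int r"
    and lower_tail: "\<And>z. z \<in> window r w \<Longrightarrow>
      prob {\<omega> \<in> space M. Xrz \<xi> r (2 * w - z) \<omega> - (\<integral>\<omega>'. Xrz \<xi> r (2 * w - z) \<omega>' \<partial>M) < - h} \<le> 1/2"
    and means: "\<And>z. z \<in> window r w \<Longrightarrow>
      (\<integral>\<omega>. Xrz \<xi> (2 * r) (2 * w) \<omega> \<partial>M) + T \<le>
        (\<integral>\<omega>. Xrz \<xi> r z \<omega> \<partial>M) + (\<integral>\<omega>. Xrz \<xi> r (2 * w - z) \<omega> \<partial>M) + t - h"
  shows "prob {\<omega> \<in> space M. Ztilde M \<xi> r w \<omega> > t} \<le>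
    2 * prob {\<omega> \<in> space M. Xrz \<xi> (2 * r) (2 * w) \<omega> - (\<integral>\<omega>'. Xrz \<xi> (2 * r) (2 * w) \<omega>' \<partial>M) > T}"
proof -
  define v where "v z = (int r - z, int r + z)" for z
  define e where "e z = (\<integral>\<omega>. Xrz \<xi> r z \<omega> \<partial>M)" for z
  define s where "s = (int (2 * r) - 2 * w, int (2 * r) + 2 * w)"
  define es where "es = (\<integral>\<omega>. Xrz \<xi> (2 * r) (2 * w) \<omega> \<partial>M)"
  have "1/2 * prob (\<Union>z\<in>window r w. {\<omega> \<in> space M. LPP \<xi> (1,1) (v z) \<omega> - e z > t}) \<le>
      prob {\<omega> \<in> space M. LPP \<xi> (1,1) s \<omega> - es > T}"
  proof (rule prob_Union_LPP_gt_le[OF finite_window])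
    fix z assume z: "z \<in> window r w"
    show "pt_le (1,1) (v z)" and "pt_le (v z + (1,1)) s"
      using inside[OF z] by (auto simp: v_def s_def pt_le_def)
    show "fst (v z) + snd (v z) = 2 * int r"
      by (simp add: v_def)
    show "es + T \<le> e z + e (2 * w - z) + t - h"
      using means[OF z] by (simp add: e_def es_def)
    have s_eq: "s = v z + (int r - (2 * w - z), int r + (2 * w - z))"
      by (simp add: v_def s_def)
    have "prob {\<omega> \<in> space M. LPP \<xi> (v z + (1,1)) s \<omega> \<in> {..< e (2 * w - z) - h}} =
        prob {\<omega> \<in> space M. Xrz \<xi> r (2 * w - z) \<omega> \<in> {..< e (2 * w - z) - h}}"
      unfolding Xrz_def s_eq
      by (rule prob_LPP_translate) (use inside[OF z] in \<open>auto simp: pt_le_def\<close>)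
    moreover have "{\<omega> \<in> space M. Xrz \<xi> r (2 * w - z) \<omega> \<in> {..< e (2 * w - z) - h}} =
        {\<omega> \<in> space M. Xrz \<xi> r (2 * w - z) \<omega> - e (2 * w - z) < - h}"
      by auto
    ultimately show "prob {\<omega> \<in> space M. LPP \<xi> (v z + (1,1)) s \<omega> - e (2 * w - z) < - h} \<le> 1 - 1/2"
      using lower_tail[OF z] by (simp add: e_def diff_less_eq)
  qed
  moreover have "prob {\<omega> \<in> space M. Ztilde M \<xi> r w \<omega> > t} \<le>
      prob (\<Union>z\<in>window r w. {\<omega> \<in> space M. LPP \<xi> (1,1) (v z) \<omega> - e z > t})"
    using Ztilde_gt_subset[of M t \<xi> r w] finite_window
    by (intro finite_measure_mono) (auto simp: Xrz_def v_def e_def)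
  ultimately show ?thesis
    by (simp add: Xrz_def s_def es_def)
qed

end

lemma exp_neg_le_half:
  fixes a :: real
  assumes "ln 2 \<le> a"
  shows "exp (- a) \<le> 1/2"
proof -
  have "exp (- a) \<le> exp (- ln 2)" using assms by simp
  then show ?thesis by (simp add: exp_minus)
qed

lemma two_exp_neg_double_le:
  fixes a :: real
  assumes "ln 2 \<le> a"
  shows "2 * exp (- 2 * a) \<le> exp (- a)"
proof -
  have "2 * exp (- 2 * a) = exp (ln 2 - a) * exp (- a)"
    by (simp add: exp_diff exp_minus field_simps flip: exp_add)
  also have "\<dots> \<le> 1 * exp (- a)"
    using assms by (intro mult_right_mono) auto
  finally show ?thesis by simp
qed

lemma le_powr_of_root_le:
  fixes a y \<alpha> :: real
  assumes "0 < \<alpha>" and "0 \<le> a" and "a powr (1/\<alpha>) \<le> y"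
  shows "a \<le> y powr \<alpha>"
proof -
  have "a = (a powr (1/\<alpha>)) powr \<alpha>"
    using assms(1,2) by (simp add: powr_powr)
  also have "\<dots> \<le> y powr \<alpha>"
    using assms by (intro powr_mono2) auto
  finally show ?thesis .
qed

lemma mult_powr_five_sixths_le:
  fixes r m a :: real
  assumes "0 < r" and "0 < m" and "0 \<le> a" and "(a / m) ^ 6 \<le> r"
  shows "a * r powr (5/6) \<le> m * r"
proof -
  have am: "0 \<le> a / m"
    using assms(2,3) by simp
  have "a / m = ((a / m) powr 6) powr (1/6)"
    using assms(2,3) by (simp only: powr_powr) simp
  also have "\<dots> = ((a / m) ^ 6) powr (1/6)"
    using am by simp
  also have "\<dots> \<le> r powr (1/6)"
    using assms by (intro powr_mono2) auto
  finally have "a \<le> m * r powr (1/6)"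
    using assms(2) by (simp add: divide_le_eq mult.commute)
  then have "a * r powr (5/6) \<le> m * r powr (1/6) * r powr (5/6)"
    by (intro mult_right_mono) auto
  also have "\<dots> = m * r"
    using assms(1) by (simp add: mult.assoc flip: powr_add)
  finally show ?thesis .
qed

lemma window_abs_le:
  fixes r K w z :: real
  assumes "1 \<le> r" and "\<bar>w\<bar> \<le> K * r powr (5/6)" and "\<bar>z - w\<bar> \<le> r powr (2/3)"
  shows "\<bar>z\<bar> \<le> (K + 1) * r powr (5/6)" and "\<bar>2 * w - z\<bar> \<le> (K + 1) * r powr (5/6)"
proof -
  have "r powr (2/3) \<le> r powr (5/6)"
    using assms(1) by (intro powr_mono) auto
  moreover have "\<bar>z\<bar> \<le> \<bar>w\<bar> + \<bar>z - w\<bar>" and "\<bar>2 * w - z\<bar> \<le> \<bar>w\<bar> + \<bar>z - w\<bar>"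
    using abs_triangle_ineq[of w "z - w"] abs_triangle_ineq4[of w "z - w"] by simp_all
  moreover have "(K + 1) * r powr (5/6) = K * r powr (5/6) + r powr (5/6)"
    by (simp add: distrib_right)
  ultimately show "\<bar>z\<bar> \<le> (K + 1) * r powr (5/6)" and "\<bar>2 * w - z\<bar> \<le> (K + 1) * r powr (5/6)"
    using assms(2,3) by linarith+
qed

lemma square_div_le:
  fixes r x :: real
  assumes "0 < r" and "\<bar>x\<bar> \<le> r powr (2/3)"
  shows "x^2 / r \<le> r powr (1/3)"
proof -
  have "x^2 = \<bar>x\<bar>^2" by simp
  also have "\<dots> \<le> (r powr (2/3))^2"
    using assms(2) by (intro power_mono) auto
  also have "\<dots> = r * r powr (1/3)"
    using assms(1) by (simp add: powr_power powr_mult_base)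
  finally show ?thesis
    using assms(1) by (simp add: divide_le_eq mult.commute)
qed

lemma fourth_power_div_le:
  fixes r x A :: real
  assumes "0 < r" and "\<bar>x\<bar> \<le> A * r powr (5/6)"
  shows "x^4 / r^3 \<le> A^4 * r powr (1/3)"
proof -
  have "x^4 = \<bar>x\<bar>^4" by (simp add: power_even_abs)
  also have "\<dots> \<le> (A * r powr (5/6))^4"
    using assms(2) by (intro power_mono) auto
  also have "\<dots> = A^4 * r powr (10/3)"
    using assms(1) by (simp add: power_mult_distrib powr_power)
  also have "r powr (10/3) = r powr 3 * r powr (1/3)"
    unfolding powr_add[symmetric] by simp
  also have "r powr 3 = r^3"
    using assms(1) by simp
  finally show ?thesis
    using assms(1) by (simp add: divide_le_eq mult.commute mult.left_commute)
qed

lemma limit_shape_midpoint_defect: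
  fixes r z w A G H g1 \<mu> E1 E2 E3 :: real
  assumes r: "0 < r" and G: "0 \<le> G" and H: "0 \<le> H"
    and zw: "\<bar>z - w\<bar> \<le> r powr (2/3)"
    and z: "\<bar>z\<bar> \<le> A * r powr (5/6)" and z': "\<bar>2 * w - z\<bar> \<le> A * r powr (5/6)"
    and E1: "\<mu> * r - G * z^2 / r - H * z^4 / r^3 - g1 * r powr (1/3) \<le> E1"
    and E2: "\<mu> * r - G * (2 * w - z)^2 / r - H * (2 * w - z)^4 / r^3 - g1 * r powr (1/3) \<le> E2"
    and E3: "E3 \<le> \<mu> * (2 * r) - G * (2 * w)^2 / (2 * r)"
  shows "E3 - (2 * G + 2 * H * A^4 + 2 * g1) * r powr (1/3) \<le> E1 + E2"
proof -
  \<comment> \<open>the curvature terms cancel up to the squared distance of \<open>z\<close> to the middle \<open>w\<close>\<close>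
  have parallelogram:
    "G * z^2 / r + G * (2 * w - z)^2 / r - G * (2 * w)^2 / (2 * r) = 2 * G * ((z - w)^2 / r)"
    using r by (simp add: field_simps power2_eq_square)
  have "2 * G * ((z - w)^2 / r) \<le> 2 * G * r powr (1/3)"
    using G square_div_le[OF r zw] by (intro mult_left_mono) auto
  moreover have "H * z^4 / r^3 \<le> H * A^4 * r powr (1/3)"
    and "H * (2 * w - z)^4 / r^3 \<le> H * A^4 * r powr (1/3)"
    using H mult_left_mono[OF fourth_power_div_le[OF r z] H] mult_left_mono[OF fourth_power_div_le[OF r z'] H]
    by (simp_all add: mult.assoc)
  ultimately show ?thesis
    using parallelogram E1 E2 E3 by (simp add: algebra_simps)
qed

section \<open>The tail bound under (LS), (UT) and (LT)\<close>

text \<open>Assumptions (LS), (UT) and (LT) of the paper with their constants made explicit.\<close>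

definition limit_shape_bounds ::
    "'w measure \<Rightarrow> (pt \<Rightarrow> 'w \<Rightarrow> real) \<Rightarrow> real \<Rightarrow> real \<Rightarrow> real \<Rightarrow> real \<Rightarrow> real \<Rightarrow> real \<Rightarrow> nat \<Rightarrow> bool" where
  "limit_shape_bounds M \<xi> \<mu> \<rho> G H g1 g2 R \<longleftrightarrow>
    (\<forall>r\<ge>R. \<forall>z::int. \<bar>real_of_int z\<bar> \<le> \<rho> * real r \<longrightarrow>
       pt_le (1,1) (int r - z, int r + z) \<and>
       (\<exists>a\<in>{- H * real_of_int z ^ 4 / real r ^ 3 .. 0}.
        \<exists>b\<in>{- g1 * real r powr (1/3) .. - g2 * real r powr (1/3)}.
          (\<integral>\<omega>. Xrz \<xi> r z \<omega> \<partial>M) = \<mu> * real r - G * real_of_int z ^ 2 / real r + a + b))"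

definition upper_tail_bound ::
    "'w measure \<Rightarrow> (pt \<Rightarrow> 'w \<Rightarrow> real) \<Rightarrow> real \<Rightarrow> real \<Rightarrow> real \<Rightarrow> real \<Rightarrow> real \<Rightarrow> bool" where
  "upper_tail_bound M \<xi> \<alpha> \<epsilon> c \<theta>0 r0 \<longleftrightarrow>
    (\<forall>r::nat. real r > r0 \<longrightarrow> (\<forall>\<theta>>\<theta>0. \<forall>z::int.
        \<bar>real_of_int z\<bar> \<le> (1 - \<epsilon>) * real r \<longrightarrow>
        measure M {\<omega> \<in> space M. Xrz \<xi> r z \<omega> - (\<integral>\<omega>'. Xrz \<xi> r z \<omega>' \<partial>M) > \<theta> * real r powr (1/3)}
          \<le> exp (- c * \<theta> powr \<alpha>)))"

definition lower_tail_bound ::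
    "'w measure \<Rightarrow> (pt \<Rightarrow> 'w \<Rightarrow> real) \<Rightarrow> real \<Rightarrow> real \<Rightarrow> real \<Rightarrow> real \<Rightarrow> real \<Rightarrow> bool" where
  "lower_tail_bound M \<xi> \<alpha> \<epsilon> c \<theta>0 r0 \<longleftrightarrow>
    (\<forall>r::nat. real r > r0 \<longrightarrow> (\<forall>\<theta>>\<theta>0. \<forall>z::int.
        \<bar>real_of_int z\<bar> \<le> (1 - \<epsilon>) * real r \<longrightarrow>
        measure M {\<omega> \<in> space M. Xrz \<xi> r z \<omega> - (\<integral>\<omega>'. Xrz \<xi> r z \<omega>' \<partial>M) < - \<theta> * real r powr (1/3)}
          \<le> exp (- c * \<theta> powr \<alpha>)))"

text \<open>The tail bounds are only used for \<open>\<epsilon> = 1/2\<close>: all deviations involved have \<open>\<bar>z\<bar> \<le> r/2\<close>.\<close>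
locale lpp_hypotheses = iid_lpp M \<xi> \<nu> for M :: "'w measure" and \<xi> \<nu> +
  fixes \<mu> \<rho> G H g1 g2 :: real and R :: nat and \<alpha> cU \<theta>U rU cL \<theta>L rL :: real
  assumes limit_shape: "limit_shape_bounds M \<xi> \<mu> \<rho> G H g1 g2 R"
    and limit_shape_pos: "0 < \<rho>" "0 < G" "0 < H" "0 < g1" "0 < g2"
    and upper_tail: "upper_tail_bound M \<xi> \<alpha> (1/2) cU \<theta>U rU"
    and lower_tail: "lower_tail_bound M \<xi> \<alpha> (1/2) cL \<theta>L rL"
    and tail_pos: "0 < \<alpha>" "0 < cU" "0 < cL"
begin

lemma mean_Xrz_bounds:
  assumes "R \<le> r" and "\<bar>real_of_int z\<bar> \<le> \<rho> * real r"
  shows "\<mu> * real r - G * real_of_int z ^ 2 / real r - H * real_of_int z ^ 4 / real r ^ 3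
      - g1 * real r powr (1/3) \<le> (\<integral>\<omega>. Xrz \<xi> r z \<omega> \<partial>M)"
    and "(\<integral>\<omega>. Xrz \<xi> r z \<omega> \<partial>M) \<le> \<mu> * real r - G * real_of_int z ^ 2 / real r"
proof -
  have "\<exists>a\<in>{- H * real_of_int z ^ 4 / real r ^ 3 .. 0}.
      \<exists>b\<in>{- g1 * real r powr (1/3) .. - g2 * real r powr (1/3)}.
        (\<integral>\<omega>. Xrz \<xi> r z \<omega> \<partial>M) = \<mu> * real r - G * real_of_int z ^ 2 / real r + a + b"
    using limit_shape assms unfolding limit_shape_bounds_def by blast
  then obtain a b where "a \<in> {- H * real_of_int z ^ 4 / real r ^ 3 .. 0}"
    and "b \<in> {- g1 * real r powr (1/3) .. - g2 * real r powr (1/3)}"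
    and mean: "(\<integral>\<omega>. Xrz \<xi> r z \<omega> \<partial>M) = \<mu> * real r - G * real_of_int z ^ 2 / real r + a + b"
    by blast
  moreover have "0 \<le> g2 * real r powr (1/3)"
    using limit_shape_pos(5) by simp
  ultimately show "\<mu> * real r - G * real_of_int z ^ 2 / real r - H * real_of_int z ^ 4 / real r ^ 3
      - g1 * real r powr (1/3) \<le> (\<integral>\<omega>. Xrz \<xi> r z \<omega> \<partial>M)"
    and "(\<integral>\<omega>. Xrz \<xi> r z \<omega> \<partial>M) \<le> \<mu> * real r - G * real_of_int z ^ 2 / real r"
    by (simp_all add: mean)
qed

lemma window_means:
  assumes "R \<le> r" and "1 \<le> real r" and "(K + 1) * real r powr (5/6) \<le> \<rho> * real r"
    and w: "\<bar>real_of_int w\<bar> \<le> K * real r powr (5/6)" and "z \<in> window r w"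
  shows "(\<integral>\<omega>. Xrz \<xi> (2 * r) (2 * w) \<omega> \<partial>M) - (2 * G + 2 * H * (K + 1)^4 + 2 * g1) * real r powr (1/3)
    \<le> (\<integral>\<omega>. Xrz \<xi> r z \<omega> \<partial>M) + (\<integral>\<omega>. Xrz \<xi> r (2 * w - z) \<omega> \<partial>M)"
proof -
  have zw: "\<bar>real_of_int z - real_of_int w\<bar> \<le> real r powr (2/3)"
    using \<open>z \<in> window r w\<close> by (simp add: window_def)
  note z = window_abs_le[OF \<open>1 \<le> real r\<close> w zw]
  have "(K + 1) * real r powr (5/6) = K * real r powr (5/6) + real r powr (5/6)"
    by (simp add: distrib_right)
  then have "\<bar>real_of_int w\<bar> \<le> \<rho> * real r"
    using w assms(3) powr_ge_zero[of "real r" "5/6"] by linarith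
  then have "\<bar>real_of_int (2 * w)\<bar> \<le> \<rho> * real (2 * r)"
    by simp
  have E1: "\<mu> * real r - G * (real_of_int z)^2 / real r - H * (real_of_int z)^4 / real r ^ 3
      - g1 * real r powr (1/3) \<le> (\<integral>\<omega>. Xrz \<xi> r z \<omega> \<partial>M)"
    using mean_Xrz_bounds(1)[OF \<open>R \<le> r\<close>] z(1) assms(3) by simp
  have E2: "\<mu> * real r - G * (2 * real_of_int w - real_of_int z)^2 / real r
      - H * (2 * real_of_int w - real_of_int z)^4 / real r ^ 3
      - g1 * real r powr (1/3) \<le> (\<integral>\<omega>. Xrz \<xi> r (2 * w - z) \<omega> \<partial>M)"
    using mean_Xrz_bounds(1)[OF \<open>R \<le> r\<close>, of "2 * w - z"] z(2) assms(3) by simp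
  have E3: "(\<integral>\<omega>. Xrz \<xi> (2 * r) (2 * w) \<omega> \<partial>M)
      \<le> \<mu> * (2 * real r) - G * (2 * real_of_int w)^2 / (2 * real r)"
    using mean_Xrz_bounds(2)[of "2 * r" "2 * w"] \<open>R \<le> r\<close> \<open>\<bar>real_of_int (2 * w)\<bar> \<le> \<rho> * real (2 * r)\<close>
    by simp
  show ?thesis
    using limit_shape_midpoint_defect[OF _ _ _ zw z E1 E2 E3] limit_shape_pos \<open>1 \<le> real r\<close> by simp
qed

lemma lower_deviation_le_half:
  assumes "rL < real r" and "\<bar>real_of_int z\<bar> \<le> (1 - 1/2) * real r"
    and "\<theta>L < \<theta>" and "ln 2 \<le> cL * \<theta> powr \<alpha>"
  shows "prob {\<omega> \<in> space M. Xrz \<xi> r z \<omega> - (\<integral>\<omega>'. Xrz \<xi> r z \<omega>' \<partial>M) < - (\<theta> * real r powr (1/3))}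
    \<le> 1/2"
proof -
  have "prob {\<omega> \<in> space M. Xrz \<xi> r z \<omega> - (\<integral>\<omega>'. Xrz \<xi> r z \<omega>' \<partial>M) < - \<theta> * real r powr (1/3)}
      \<le> exp (- cL * \<theta> powr \<alpha>)"
    using lower_tail assms(1-3) unfolding lower_tail_bound_def by blast
  also have "\<dots> \<le> 1/2"
    using exp_neg_le_half[OF assms(4)] by simp
  finally show ?thesis by simp
qed

lemma endpoint_upper_deviation:
  assumes "1 \<le> real r" and "rU < real r" and "\<bar>real_of_int w\<bar> \<le> (1 - 1/2) * real r"
    and "\<theta>U < \<theta> / 8" and "0 < \<theta>"
  shows "prob {\<omega> \<in> space M. Xrz \<xi> (2 * r) (2 * w) \<omega> - (\<integral>\<omega>'. Xrz \<xi> (2 * r) (2 * w) \<omega>' \<partial>M)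
      > \<theta> / 4 * real r powr (1/3)} \<le> exp (- cU * (\<theta> / 8) powr \<alpha>)"
proof -
  have "real (2 * r) powr (1/3) = 2 powr (1/3) * real r powr (1/3)"
    by (simp add: powr_mult)
  also have "\<dots> \<le> 2 * real r powr (1/3)"
    using powr_mono[of "1/3" 1 "2::real"] by (intro mult_right_mono) auto
  finally have "\<theta> / 8 * real (2 * r) powr (1/3) \<le> \<theta> / 4 * real r powr (1/3)"
    using assms(5) by (simp add: field_simps)
  then have "prob {\<omega> \<in> space M. Xrz \<xi> (2 * r) (2 * w) \<omega> - (\<integral>\<omega>'. Xrz \<xi> (2 * r) (2 * w) \<omega>' \<partial>M)
        > \<theta> / 4 * real r powr (1/3)} \<le>
      prob {\<omega> \<in> space M. Xrz \<xi> (2 * r) (2 * w) \<omega> - (\<integral>\<omega>'. Xrz \<xi> (2 * r) (2 * w) \<omega>' \<partial>M)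
        > \<theta> / 8 * real (2 * r) powr (1/3)}"
    by (intro finite_measure_mono) (auto simp: Xrz_def)
  also have "\<dots> \<le> exp (- cU * (\<theta> / 8) powr \<alpha>)"
  proof -
    have "\<bar>real_of_int (2 * w)\<bar> \<le> (1 - 1/2) * real (2 * r)" and "rU < real (2 * r)"
      using assms(1-3) by simp_all
    then show ?thesis
      using upper_tail assms(4) unfolding upper_tail_bound_def by blast
  qed
  finally show ?thesis .
qed

lemma Ztilde_tail_at_scale:
  assumes r: "R \<le> r" "1 \<le> real r" "rU < real r" "rL < real r"
    and scale: "(K + 1) * real r powr (5/6) \<le> min \<rho> (1/2) * real r"
    and w: "\<bar>real_of_int w\<bar> \<le> K * real r powr (5/6)"
    and \<theta>: "4 * (2 * G + 2 * H * (K + 1)^4 + 2 * g1) \<le> \<theta>" "\<theta>U < \<theta> / 8" "\<theta>L < \<theta> / 2"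
      "ln 2 \<le> cL * (\<theta> / 2) powr \<alpha>" "ln 2 \<le> cU / (2 * 8 powr \<alpha>) * \<theta> powr \<alpha>"
  shows "prob {\<omega> \<in> space M. Ztilde M \<xi> r w \<omega> > \<theta> * real r powr (1/3)}
    \<le> exp (- (cU / (2 * 8 powr \<alpha>)) * \<theta> powr \<alpha>)"
proof -
  have "0 < 4 * (2 * G + 2 * H * (K + 1)^4 + 2 * g1)"
    using limit_shape_pos by (intro mult_pos_pos add_pos_pos add_pos_nonneg) auto
  then have "0 < \<theta>"
    using \<theta>(1) by (rule less_le_trans)
  have "(K + 1) * real r powr (5/6) \<le> \<rho> * real r" and half: "(K + 1) * real r powr (5/6) \<le> 1/2 * real r"
    using order.trans[OF scale mult_right_mono[of "min \<rho> (1/2)" \<rho> "real r"]]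
      order.trans[OF scale mult_right_mono[of "min \<rho> (1/2)" "1/2" "real r"]] by auto
  have "prob {\<omega> \<in> space M. Ztilde M \<xi> r w \<omega> > \<theta> * real r powr (1/3)} \<le>
      2 * prob {\<omega> \<in> space M. Xrz \<xi> (2 * r) (2 * w) \<omega> - (\<integral>\<omega>'. Xrz \<xi> (2 * r) (2 * w) \<omega>' \<partial>M)
        > \<theta> / 4 * real r powr (1/3)}"
  proof (rule prob_Ztilde_gt_le[where h = "\<theta> / 2 * real r powr (1/3)"])
    fix z assume z: "z \<in> window r w"
    then have zw: "\<bar>real_of_int z - real_of_int w\<bar> \<le> real r powr (2/3)"
      by (simp add: window_def)
    then have "\<bar>real_of_int z\<bar> \<le> (1 - 1/2) * real r" and "\<bar>real_of_int (2 * w - z)\<bar> \<le> (1 - 1/2) * real r"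
      using window_abs_le[OF r(2) w zw] half by simp_all
    moreover have "(1 - 1/2) * real r < real r"
      using r(2) by simp
    ultimately show "\<bar>z\<bar> < int r \<and> \<bar>2 * w - z\<bar> < int r"
      by (metis of_int_abs of_int_less_iff of_int_of_nat_eq order.strict_trans1)
    show "prob {\<omega> \<in> space M. Xrz \<xi> r (2 * w - z) \<omega> - (\<integral>\<omega>'. Xrz \<xi> r (2 * w - z) \<omega>' \<partial>M)
        < - (\<theta> / 2 * real r powr (1/3))} \<le> 1/2"
      by (rule lower_deviation_le_half) fact+
    have "(2 * G + 2 * H * (K + 1)^4 + 2 * g1) * real r powr (1/3) \<le> \<theta> / 4 * real r powr (1/3)"
      using \<theta>(1) by (intro mult_right_mono) auto
    then show "(\<integral>\<omega>. Xrz \<xi> (2 * r) (2 * w) \<omega> \<partial>M) + \<theta> / 4 * real r powr (1/3) \<le>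
        (\<integral>\<omega>. Xrz \<xi> r z \<omega> \<partial>M) + (\<integral>\<omega>. Xrz \<xi> r (2 * w - z) \<omega> \<partial>M)
          + \<theta> * real r powr (1/3) - \<theta> / 2 * real r powr (1/3)"
      using window_means[OF r(1,2) \<open>(K + 1) * real r powr (5/6) \<le> \<rho> * real r\<close> w z] by simp
  qed
  also have "\<dots> \<le> 2 * exp (- cU * (\<theta> / 8) powr \<alpha>)"
    using endpoint_upper_deviation[OF r(2,3) _ \<theta>(2) \<open>0 < \<theta>\<close>] window_abs_le[OF r(2) w, of w] half
    by simp
  also have "cU * (\<theta> / 8) powr \<alpha> = 2 * (cU / (2 * 8 powr \<alpha>) * \<theta> powr \<alpha>)"
    using \<open>0 < \<theta>\<close> by (simp add: powr_divide)
  then have "2 * exp (- cU * (\<theta> / 8) powr \<alpha>) \<le> exp (- (cU / (2 * 8 powr \<alpha>)) * \<theta> powr \<alpha>)"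
    using two_exp_neg_double_le[OF \<theta>(5)] by simp
  finally show ?thesis .
qed

theorem Ztilde_tail:
  "\<forall>K>0. \<exists>c>0. \<exists>\<theta>0 r0. \<forall>\<theta>>\<theta>0. \<forall>r::nat. real r > r0 \<longrightarrow>
      (\<forall>w::int. \<bar>real_of_int w\<bar> \<le> K * real r powr (5/6) \<longrightarrow>
        measure M {\<omega> \<in> space M. Ztilde M \<xi> r w \<omega> > \<theta> * real r powr (1/3)}
          \<le> exp (- c * \<theta> powr \<alpha>))"
proof (intro allI impI)
  fix K :: real assume "0 < K"
  define m where "m = min \<rho> (1/2)"
  define c where "c = cU / (2 * 8 powr \<alpha>)"
  define \<theta>0 where "\<theta>0 = max (4 * (2 * G + 2 * H * (K + 1)^4 + 2 * g1))
    (max (8 * \<theta>U) (max (2 * \<theta>L) (max (2 * (ln 2 / cL) powr (1/\<alpha>)) ((ln 2 / c) powr (1/\<alpha>)))))"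
  define r0 where "r0 = max (real R) (max rU (max rL (max 1 (((K + 1) / m)^6))))"
  have "0 < m" "0 < c"
    using limit_shape_pos tail_pos by (simp_all add: m_def c_def)
  have "prob {\<omega> \<in> space M. Ztilde M \<xi> r w \<omega> > \<theta> * real r powr (1/3)} \<le> exp (- c * \<theta> powr \<alpha>)"
    if "\<theta>0 < \<theta>" and "r0 < real r" and w: "\<bar>real_of_int w\<bar> \<le> K * real r powr (5/6)" for \<theta> r w
  proof -
    from that have \<theta>: "4 * (2 * G + 2 * H * (K + 1)^4 + 2 * g1) \<le> \<theta>" "\<theta>U < \<theta> / 8" "\<theta>L < \<theta> / 2"
        "(ln 2 / cL) powr (1/\<alpha>) \<le> \<theta> / 2" "(ln 2 / c) powr (1/\<alpha>) \<le> \<theta>"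
      and r: "R \<le> r" "1 \<le> real r" "rU < real r" "rL < real r" "((K + 1) / m)^6 \<le> real r"
      by (simp_all add: \<theta>0_def r0_def)
    have "ln 2 \<le> cL * (\<theta> / 2) powr \<alpha>"
      using le_powr_of_root_le[OF tail_pos(1) _ \<theta>(4)] tail_pos(3) by (simp add: divide_le_eq mult.commute)
    moreover have "ln 2 \<le> c * \<theta> powr \<alpha>"
      using le_powr_of_root_le[OF tail_pos(1) _ \<theta>(5)] \<open>0 < c\<close> by (simp add: divide_le_eq mult.commute)
    moreover have "(K + 1) * real r powr (5/6) \<le> m * real r"
      using mult_powr_five_sixths_le[OF _ \<open>0 < m\<close> _ r(5)] \<open>0 < K\<close> r(2) by simp
    ultimately show ?thesis
      using Ztilde_tail_at_scale[OF r(1-4) _ w \<theta>(1-3)] unfolding m_def c_def by simp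
  qed
  then show "\<exists>c>0. \<exists>\<theta>0 r0. \<forall>\<theta>>\<theta>0. \<forall>r::nat. real r > r0 \<longrightarrow>
      (\<forall>w::int. \<bar>real_of_int w\<bar> \<le> K * real r powr (5/6) \<longrightarrow>
        measure M {\<omega> \<in> space M. Ztilde M \<xi> r w \<omega> > \<theta> * real r powr (1/3)}
          \<le> exp (- c * \<theta> powr \<alpha>))"
    using \<open>0 < c\<close> by blast
qed
end

theorem lemmaA2:
  fixes M :: "'w measure" and \<xi> :: "pt \<Rightarrow> 'w \<Rightarrow> real" and \<nu> :: "real measure"
    and \<mu> \<alpha> :: real
  assumes prob: "prob_space M"
    and iid: "prob_space.indep_vars M (\<lambda>_. borel) \<xi> UNIV"
    and law: "\<And>v. distr M borel (\<xi> v) = \<nu>"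
    and supp: "emeasure \<nu> {..<0} = 0"
    and integ: "\<And>r. integrable M (Xrz \<xi> r 0)"
    and mu: "(\<lambda>r. (\<integral>\<omega>. Xrz \<xi> r 0 \<omega> \<partial>M) / real r) \<longlonglongrightarrow> \<mu>"
    and LS: "\<exists>\<rho> G H g1 g2 :: real. \<rho> > 0 \<and> G > 0 \<and> H > 0 \<and> g1 > 0 \<and> g2 > 0 \<and>
      (\<exists>R. \<forall>r\<ge>R. \<forall>z::int. \<bar>real_of_int z\<bar> \<le> \<rho> * real r \<longrightarrow>
         pt_le (1,1) (int r - z, int r + z) \<and>
         (\<exists>a\<in>{- H * real_of_int z ^ 4 / real r ^ 3 .. 0}.
          \<exists>b\<in>{- g1 * real r powr (1/3) .. - g2 * real r powr (1/3)}.
            (\<integral>\<omega>. Xrz \<xi> r z \<omega> \<partial>M) = \<mu> * real r - G * real_of_int z ^ 2 / real r + a + b))"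
    and alpha: "\<alpha> > 0"
    and UT: "\<forall>\<epsilon>>0. \<exists>c>0. \<exists>\<theta>0>0. \<exists>r0>0. \<forall>r::nat. real r > r0 \<longrightarrow> (\<forall>\<theta>>\<theta>0. \<forall>z::int.
        \<bar>real_of_int z\<bar> \<le> (1 - \<epsilon>) * real r \<longrightarrow>
        measure M {\<omega> \<in> space M. Xrz \<xi> r z \<omega> - (\<integral>\<omega>'. Xrz \<xi> r z \<omega>' \<partial>M) > \<theta> * real r powr (1/3)}
          \<le> exp (- c * \<theta> powr \<alpha>))"
    and LT: "\<forall>\<epsilon>>0. \<exists>c>0. \<exists>\<theta>0>0. \<exists>r0>0. \<forall>r::nat. real r > r0 \<longrightarrow> (\<forall>\<theta>>\<theta>0. \<forall>z::int.
        \<bar>real_of_int z\<bar> \<le> (1 - \<epsilon>) * real r \<longrightarrow>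
        measure M {\<omega> \<in> space M. Xrz \<xi> r z \<omega> - (\<integral>\<omega>'. Xrz \<xi> r z \<omega>' \<partial>M) < - \<theta> * real r powr (1/3)}
          \<le> exp (- c * \<theta> powr \<alpha>))"
  shows "\<forall>K>0. \<exists>c>0. \<exists>\<theta>0 r0. \<forall>\<theta>>\<theta>0. \<forall>r::nat. real r > r0 \<longrightarrow>
      (\<forall>w::int. \<bar>real_of_int w\<bar> \<le> K * real r powr (5/6) \<longrightarrow>
        measure M {\<omega> \<in> space M. Ztilde M \<xi> r w \<omega> > \<theta> * real r powr (1/3)}
          \<le> exp (- c * \<theta> powr \<alpha>))"
proof -
  interpret iid_lpp M \<xi> \<nu>
    using prob iid law supp by (simp add: iid_lpp_def iid_lpp_axioms_def)
  obtain \<rho> G H g1 g2 R where limit_shape: "limit_shape_bounds M \<xi> \<mu> \<rho> G H g1 g2 R"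
    and "0 < \<rho>" "0 < G" "0 < H" "0 < g1" "0 < g2"
    using LS unfolding limit_shape_bounds_def by blast
  obtain cU \<theta>U rU where "0 < cU" and upper: "upper_tail_bound M \<xi> \<alpha> (1/2) cU \<theta>U rU"
    using UT[rule_format, of "1/2"] unfolding upper_tail_bound_def by auto
  obtain cL \<theta>L rL where "0 < cL" and lower: "lower_tail_bound M \<xi> \<alpha> (1/2) cL \<theta>L rL"
    using LT[rule_format, of "1/2"] unfolding lower_tail_bound_def by auto
  interpret lpp_hypotheses M \<xi> \<nu> \<mu> \<rho> G H g1 g2 R \<alpha> cU \<theta>U rU cL \<theta>L rL
    by unfold_locales (use limit_shape upper lower alpha \<open>0 < cU\<close> \<open>0 < cL\<close> \<open>0 < \<rho>\<close> \<open>0 < G\<close>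
        \<open>0 < H\<close> \<open>0 < g1\<close> \<open>0 < g2\<close> in auto)
  show ?thesis
    by (rule Ztilde_tail)
qed

end
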